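(* Let $f$ satisfy $(\mathcal A)$, let $t_0>0$, $q>0$, $p\ge1$, $\gamma>1$. Let $x:[t_0,+\infty[\to\mathcal H$ be twice continuously differentiable and $\lambda:[t_0,+\infty[\to\,]0,+\infty[$ continuously differentiable, and let $\tau(t)=\frac{1}{q^q}\big(t_0+\int_{t_0}^t[\lambda(r)]^{1/q}dr\big)^q$, such that for all $t\ge t_0$: $$\ddot x(t)+\frac{(1+\gamma)\dot\tau(t)^2-\tau(t)\ddot\tau(t)}{\tau(t)\dot\tau(t)}\dot x(t)+\gamma\frac{\dot\tau(t)^2}{\tau(t)}\nabla f\Big(x(t)+\frac1\gamma\frac{\tau(t)}{\dot\tau(t)}\dot x(t)\Big)=0,$$ $$[\lambda(t)]^p|\dot\tau(t)|^{p-1}\Big\|\nabla f\Big(x(t)+\frac1\gamma\frac{\tau(t)}{\dot\tau(t)}\dot x(t)\Big)\Big\|^{p-1}=1 .$$ Then $f(x(t))-\inf_{\mathcal H}f=o\big(t^{-(1+q-\frac1p)}\big)$ as $t\to+\infty$, and $x(t)$ converges weakly as $t\to+\infty$ to an element of $S=\operatorname{argmin} f$.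
   Context: $\mathcal H$ is a real Hilbert space. Assumption $(\mathcal A)$: $f:\mathcal H\to\mathbb R$ is convex and continuously differentiable, $S=\operatorname{argmin}_{\mathcal H} f\neq\emptyset$, and $\nabla f$ is Lipschitz continuous on bounded subsets of $\mathcal H$. *)

theory Defs
  imports "HOL-Analysis.Analysis" "HOL-Library.Landau_Symbols"
begin

definition weak_conv_at_top :: "(real \<Rightarrow> 'a::real_inner) \<Rightarrow> 'a \<Rightarrow> bool" where
  "weak_conv_at_top x z \<longleftrightarrow> (\<forall>y. ((\<lambda>t. x t \<bullet> y) \<longlongrightarrow> z \<bullet> y) at_top)"

end

theory Submission
  imports Defs "HOL-Library.Diagonal_Subsequence"
begin

(*
  Let y = x + (1/gamma) (tau/tau') x' be the point at which the gradient is evaluated. The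
  second-order equation says exactly that y follows the time-rescaled gradient flow
  y' = - tau' grad f(y), and x is recovered from y through the averaging equation
  x' = gamma (tau'/tau) (y - x).

  For a minimiser z the energy tau (f(y) - min f) + |y - z|^2 / 2 is nonincreasing and dissipates
  at rate at least tau tau' |grad f(y)|^2. Hence tau (f(y) - min f) -> 0 as soon as tau -> infinity,
  and y converges weakly to a minimiser by Opial's lemma. The averaging equation transports both
  facts to x, the first one by convexity of f along the segment from x to y.

  It remains to show that tau grows at least like t^(1 + q - 1/p). Write tau = (Lam/q)^q. For p > 1
  the coupling law makes the derivative of Lam^(1 - kappa), for a suitable kappa, a negative power
  of the dissipation, and a weighted AM-GM inequality trades the bounded integral of the
  dissipation for growth of Lam. For p = 1 the coupling forces lam = 1, i.e. Lam t = t.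
*)

section \<open>Weak sequential compactness in Hilbert spaces\<close>

definition weak_conv_seq :: "(nat \<Rightarrow> 'a::real_inner) \<Rightarrow> 'a \<Rightarrow> bool" where
  "weak_conv_seq s u \<longleftrightarrow> (\<forall>v. (\<lambda>n. s n \<bullet> v) \<longlonglongrightarrow> u \<bullet> v)"

lemma parallelogram_midpoint:
  fixes v a b :: "'a::real_inner"
  shows "(norm (a - b))\<^sup>2 = 2 * (norm (v - a))\<^sup>2 + 2 * (norm (v - b))\<^sup>2 - 4 * (norm (v - (1/2) *\<^sub>R (a + b)))\<^sup>2"
  unfolding power2_norm_eq_inner by (simp add: inner_diff inner_add inner_commute algebra_simps)

lemma convex_minimizing_seq_Cauchy:
  fixes M :: "'a::real_inner set"
  assumes "convex M" and c_in: "\<And>n. c n \<in> M" and "0 \<le> d" and d_le: "\<And>m. m \<in> M \<Longrightarrow> d \<le> norm (v - m)"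
    and c_near: "\<And>n. (norm (v - c n))\<^sup>2 < d\<^sup>2 + 1 / Suc n"
  shows "Cauchy c"
proof (rule CauchyI)
  have c_diff: "(norm (c m - c n))\<^sup>2 \<le> 2 / Suc m + 2 / Suc n" for m n
  proof -
    have "(1/2) *\<^sub>R (c m + c n) \<in> M"
      using convexD[OF \<open>convex M\<close> c_in c_in, of "1/2" "1/2"] by (simp add: scaleR_add_right)
    then have "d\<^sup>2 \<le> (norm (v - (1/2) *\<^sub>R (c m + c n)))\<^sup>2"
      using d_le \<open>0 \<le> d\<close> power_mono by blast
    then show ?thesis
      using parallelogram_midpoint[of "c m" "c n" v] c_near[of m] c_near[of n] by linarith
  qed
  fix e :: real assume "0 < e"
  obtain N :: nat where N: "4 / e\<^sup>2 < N" using reals_Archimedean2 by blast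
  have "norm (c m - c n) < e" if "m \<ge> N" "n \<ge> N" for m n
  proof -
    have "2 / Suc m + 2 / Suc n \<le> 2 / Suc N + 2 / Suc N"
      using that by (intro add_mono divide_left_mono) auto
    also have "\<dots> = 4 / Suc N" by simp
    also have "\<dots> < e\<^sup>2"
      using N \<open>0 < e\<close> by (simp add: field_simps) (smt (verit) zero_less_power)
    finally have "(norm (c m - c n))\<^sup>2 < e\<^sup>2"
      using c_diff[of m n] by linarith
    then show ?thesis
      using \<open>0 < e\<close> by (simp add: power_less_imp_less_base)
  qed
  then show "\<exists>N. \<forall>m\<ge>N. \<forall>n\<ge>N. norm (c m - c n) < e" by blast
qed

lemma closed_convex_nearest_point_exists:
  fixes M :: "'a::{real_inner,complete_space} set"
  assumes "closed M" "convex M" "M \<noteq> {}"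
  shows "\<exists>p\<in>M. \<forall>m\<in>M. norm (v - p) \<le> norm (v - m)"
proof -
  define d where "d = infdist v M"
  have d_nonneg: "0 \<le> d" by (simp add: d_def infdist_nonneg)
  have d_le: "d \<le> norm (v - m)" if "m \<in> M" for m
    using infdist_le[OF that, of v] by (simp add: d_def dist_norm)
  have "\<exists>c\<in>M. (norm (v - c))\<^sup>2 < d\<^sup>2 + 1 / Suc n" for n
  proof -
    have "(INF m\<in>M. dist v m) < sqrt (d\<^sup>2 + 1 / Suc n)"
      using real_less_rsqrt[of d "d\<^sup>2 + 1 / Suc n"]
      by (simp add: d_def infdist_notempty[OF \<open>M \<noteq> {}\<close>, symmetric])
    then obtain c where "c \<in> M" "norm (v - c) < sqrt (d\<^sup>2 + 1 / Suc n)"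
      using \<open>M \<noteq> {}\<close> by (subst (asm) cINF_less_iff) (auto intro: bdd_belowI[of _ 0] simp: dist_norm)
    then show ?thesis
      by (metis norm_ge_zero power_strict_mono real_sqrt_pow2 zero_less_numeral
          add_nonneg_nonneg zero_le_power2 of_nat_0_le_iff divide_nonneg_nonneg zero_le_one)
  qed
  then obtain c where c_in: "\<And>n. c n \<in> M" and c_near: "\<And>n. (norm (v - c n))\<^sup>2 < d\<^sup>2 + 1 / Suc n"
    by metis
  then have "Cauchy c"
    using convex_minimizing_seq_Cauchy[OF \<open>convex M\<close> _ d_nonneg d_le] by blast
  then obtain p where "c \<longlonglongrightarrow> p" using Cauchy_convergent_iff convergent_def by blast
  then have "p \<in> M" using \<open>closed M\<close> c_in closed_sequentially by blast
  have "(\<lambda>n. (norm (v - c n))\<^sup>2) \<longlonglongrightarrow> (norm (v - p))\<^sup>2"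
    by (intro tendsto_intros \<open>c \<longlonglongrightarrow> p\<close>)
  moreover have "(\<lambda>n. d\<^sup>2 + 1 / Suc n) \<longlonglongrightarrow> d\<^sup>2"
    using tendsto_add[OF tendsto_const LIMSEQ_Suc[OF lim_inverse_n']] by (simp add: inverse_eq_divide)
  ultimately have "(norm (v - p))\<^sup>2 \<le> d\<^sup>2"
    using c_near by (intro LIMSEQ_le) (auto intro: less_imp_le)
  then have "norm (v - p) \<le> d" using d_nonneg by (simp add: power2_le_iff_abs_le)
  then show ?thesis using \<open>p \<in> M\<close> d_le by (meson order_trans)
qed

lemma nearest_point_subspace_orthogonal:
  fixes M :: "'a::real_inner set"
  assumes "subspace M" "p \<in> M" and nearest: "\<forall>m\<in>M. norm (v - p) \<le> norm (v - m)" and "m \<in> M"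
  shows "(v - p) \<bullet> m = 0"
proof (cases "m = 0")
  case False
  define a where "a = (v - p) \<bullet> m"
  have "0 < m \<bullet> m" using False by simp
  have "p + (a / (m \<bullet> m)) *\<^sub>R m \<in> M"
    using assms by (simp add: subspace_add subspace_scale)
  then have "(norm (v - p))\<^sup>2 \<le> (norm (v - (p + (a / (m \<bullet> m)) *\<^sub>R m)))\<^sup>2"
    using nearest by (simp add: power_mono)
  also have "\<dots> = (norm (v - p))\<^sup>2 - a\<^sup>2 / (m \<bullet> m)"
    using \<open>0 < m \<bullet> m\<close> unfolding power2_norm_eq_inner a_def
    by (simp add: inner_diff inner_add inner_commute power2_eq_square field_simps)
  finally have "a\<^sup>2 \<le> 0"
    using \<open>0 < m \<bullet> m\<close> by (simp add: divide_le_0_iff)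
  then show ?thesis by (simp add: a_def)
qed simp

lemma closed_subspace_orthogonal_projection:
  fixes M :: "'a::{real_inner,complete_space} set"
  assumes "subspace M" "closed M"
  shows "\<exists>p\<in>M. \<forall>m\<in>M. (v - p) \<bullet> m = 0"
proof -
  have "M \<noteq> {}" using subspace_0[OF \<open>subspace M\<close>] by blast
  then obtain p where "p \<in> M" "\<forall>m\<in>M. norm (v - p) \<le> norm (v - m)"
    using closed_convex_nearest_point_exists[OF \<open>closed M\<close> subspace_imp_convex[OF \<open>subspace M\<close>]]
    by blast
  then show ?thesis using nearest_point_subspace_orthogonal[OF \<open>subspace M\<close>] by blast
qed

lemma riesz_representation:
  fixes L :: "'a::{real_inner,complete_space} \<Rightarrow> real"
  assumes "bounded_linear L"
  shows "\<exists>u. \<forall>h. L h = h \<bullet> u"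
proof (cases "\<forall>h. L h = 0")
  case False
  then obtain v where "L v \<noteq> 0" by auto
  interpret L: bounded_linear L by fact
  define N where "N = {h. L h = 0}"
  have "subspace N" unfolding N_def subspace_def by (auto simp: L.add L.scale)
  moreover have "closed N" unfolding N_def
    by (intro closed_Collect_eq continuous_on_const L.continuous_on continuous_on_id)
  ultimately obtain p where "p \<in> N" and orth: "\<And>m. m \<in> N \<Longrightarrow> (v - p) \<bullet> m = 0"
    using closed_subspace_orthogonal_projection by blast
  define w where "w = v - p"
  have "L w = L v" using \<open>p \<in> N\<close> by (simp add: w_def N_def L.diff)
  then have "w \<bullet> w \<noteq> 0" using \<open>L v \<noteq> 0\<close> L.zero by auto
  have "L h = h \<bullet> ((L w / (w \<bullet> w)) *\<^sub>R w)" for h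
  proof -
    have "h - (L h / L w) *\<^sub>R w \<in> N" using \<open>L w = L v\<close> \<open>L v \<noteq> 0\<close> by (simp add: N_def L.diff L.scale)
    then have "w \<bullet> (h - (L h / L w) *\<^sub>R w) = 0" using orth by (simp add: w_def)
    then have "w \<bullet> h = (L h / L w) * (w \<bullet> w)" by (simp add: inner_diff_right)
    then show ?thesis using \<open>w \<bullet> w \<noteq> 0\<close> \<open>L w = L v\<close> \<open>L v \<noteq> 0\<close> by (simp add: inner_commute field_simps)
  qed
  then show ?thesis by blast
qed (intro exI[of _ 0], simp)

lemma diagonal_subseq_convergent:
  fixes a :: "nat \<Rightarrow> nat \<Rightarrow> real"
  assumes "\<And>k. bounded (range (a k))"
  shows "\<exists>r. strict_mono r \<and> (\<forall>k. convergent (\<lambda>n. a k (r n)))"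
proof -
  interpret subseqs "\<lambda>k r. convergent (\<lambda>n. a k (r n))"
  proof
    fix k and s :: "nat \<Rightarrow> nat"
    have "bounded (range (\<lambda>n. a k (s n)))"
      using assms[of k] by (rule bounded_subset) auto
    then obtain l r' where "strict_mono r'" "((\<lambda>n. a k (s n)) \<circ> r') \<longlonglongrightarrow> l"
      using bounded_imp_convergent_subsequence by blast
    then show "\<exists>r'. strict_mono r' \<and> convergent (\<lambda>n. a k ((s \<circ> r') n))"
      by (auto simp: convergent_def o_def)
  qed
  have "convergent (\<lambda>n. a k (diagseq n))" for k
  proof -
    have "convergent (\<lambda>n. a k ((diagseq \<circ> (+) (Suc k)) n))"
      by (rule diagseq_holds) (auto simp: convergent_def o_def intro: LIMSEQ_subseq_LIMSEQ[unfolded o_def])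
    then obtain l where "(\<lambda>n. a k (diagseq (n + Suc k))) \<longlonglongrightarrow> l"
      by (auto simp: convergent_def add.commute)
    then have "(\<lambda>n. a k (diagseq n)) \<longlonglongrightarrow> l"
      by (rule LIMSEQ_offset)
    then show ?thesis by (rule convergentI)
  qed
  then show ?thesis using subseq_diagseq by blast
qed

lemma subspace_convergent_inner: "subspace {v. convergent (\<lambda>n. s n \<bullet> v)}"
  unfolding subspace_def
  by (auto simp: inner_add_right intro: convergent_add convergent_mult convergent_const)

lemma closed_convergent_inner:
  fixes s :: "nat \<Rightarrow> 'a::real_inner"
  assumes bound: "\<And>n. norm (s n) \<le> B"
  shows "closed {v. convergent (\<lambda>n. s n \<bullet> v)}"
proof (rule closed_sequential_limits[THEN iffD2], intro allI impI, elim conjE)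
  fix w v assume w_conv: "\<forall>k. w k \<in> {v. convergent (\<lambda>n. s n \<bullet> v)}" and "w \<longlonglongrightarrow> v"
  have "Cauchy (\<lambda>n. s n \<bullet> v)"
  proof (rule CauchyI)
    fix e :: real assume "0 < e"
    then obtain k where k: "norm (w k - v) < e / (3 * (\<bar>B\<bar> + 1))"
      using \<open>w \<longlonglongrightarrow> v\<close> by (auto simp: LIMSEQ_iff dest!: spec[of _ "e / (3 * (\<bar>B\<bar> + 1))"])
    have "Cauchy (\<lambda>n. s n \<bullet> w k)" using w_conv by (simp add: Cauchy_convergent_iff)
    then obtain N where N: "\<And>m n. m \<ge> N \<Longrightarrow> n \<ge> N \<Longrightarrow> \<bar>s m \<bullet> w k - s n \<bullet> w k\<bar> < e / 3"
      using \<open>0 < e\<close> unfolding Cauchy_iff real_norm_def by (meson divide_pos_pos zero_less_numeral)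
    have close: "\<bar>s n \<bullet> v - s n \<bullet> w k\<bar> \<le> e / 3" for n
    proof -
      have "\<bar>s n \<bullet> v - s n \<bullet> w k\<bar> \<le> norm (s n) * norm (v - w k)"
        using Cauchy_Schwarz_ineq2[of "s n" "v - w k"] by (simp add: inner_diff_right)
      also have "\<dots> \<le> (\<bar>B\<bar> + 1) * (e / (3 * (\<bar>B\<bar> + 1)))"
        using k bound[of n] by (intro mult_mono) (auto simp: norm_minus_commute)
      also have "\<dots> = e / 3"
        by (simp add: field_simps add_pos_nonneg)
      finally show ?thesis .
    qed
    have "\<bar>s m \<bullet> v - s n \<bullet> v\<bar> < e" if "m \<ge> N" "n \<ge> N" for m n
      using N[OF that] close[of m] close[of n] by linarith
    then show "\<exists>N. \<forall>m\<ge>N. \<forall>n\<ge>N. norm (s m \<bullet> v - s n \<bullet> v) < e" by auto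
  qed
  then show "v \<in> {v. convergent (\<lambda>n. s n \<bullet> v)}" by (simp add: Cauchy_convergent_iff)
qed

lemma convergent_inner_imp_weak_conv:
  fixes s :: "nat \<Rightarrow> 'a::{real_inner,complete_space}"
  assumes bound: "\<And>n. norm (s n) \<le> B" and conv: "\<And>v. convergent (\<lambda>n. s n \<bullet> v)"
  shows "\<exists>u. weak_conv_seq s u"
proof -
  define L where "L v = lim (\<lambda>n. s n \<bullet> v)" for v
  have L_lim: "(\<lambda>n. s n \<bullet> v) \<longlonglongrightarrow> L v" for v
    using conv[of v] by (simp add: L_def convergent_LIMSEQ_iff)
  have "bounded_linear L"
  proof (rule bounded_linear_intro[where K = B])
    show "L (v + w) = L v + L w" for v w
      using tendsto_add[OF L_lim[of v] L_lim[of w]] L_lim[of "v + w"]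
      by (simp add: inner_add_right LIMSEQ_unique)
    show "L (c *\<^sub>R v) = c *\<^sub>R L v" for c v
      using tendsto_mult_left[OF L_lim[of v], of c] L_lim[of "c *\<^sub>R v"]
      by (simp add: LIMSEQ_unique)
    have "\<bar>s n \<bullet> v\<bar> \<le> B * norm v" for n v
      using Cauchy_Schwarz_ineq2[of "s n" v] bound[of n] by (meson mult_right_mono norm_ge_zero order_trans)
    then show "norm (L v) \<le> norm v * B" for v
      using Lim_bounded[OF tendsto_rabs[OF L_lim[of v]], of 0] by (auto simp: mult.commute)
  qed
  then obtain u where "\<And>v. L v = v \<bullet> u" using riesz_representation by blast
  then have "weak_conv_seq s u"
    using L_lim by (simp add: weak_conv_seq_def inner_commute)
  then show ?thesis ..
qed

lemma bounded_seq_weakly_convergent_subseq: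
  fixes s :: "nat \<Rightarrow> 'a::{real_inner,complete_space}"
  assumes bound: "\<And>n. norm (s n) \<le> B"
  shows "\<exists>r u. strict_mono r \<and> weak_conv_seq (s \<circ> r) u"
proof -
  have "\<bar>s n \<bullet> s k\<bar> \<le> B * norm (s k)" for n k
    using Cauchy_Schwarz_ineq2[of "s n" "s k"] bound[of n] by (meson mult_right_mono norm_ge_zero order_trans)
  then have "bounded (range (\<lambda>n. s n \<bullet> s k))" for k
    by (intro boundedI[of _ "B * norm (s k)"]) auto
  then obtain r where "strict_mono r" and conv_s: "\<And>k. convergent (\<lambda>n. s (r n) \<bullet> s k)"
    using diagonal_subseq_convergent[of "\<lambda>k n. s n \<bullet> s k"] by blast
  define C where "C = {v. convergent (\<lambda>n. s (r n) \<bullet> v)}"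
  have "subspace C" "closed C"
    unfolding C_def using subspace_convergent_inner closed_convergent_inner[of "s \<circ> r" B] bound
    by (auto simp: o_def)
  have "convergent (\<lambda>n. s (r n) \<bullet> v)" for v
  proof -
    obtain p where "p \<in> C" and orth: "\<And>m. m \<in> C \<Longrightarrow> (v - p) \<bullet> m = 0"
      using closed_subspace_orthogonal_projection[OF \<open>subspace C\<close> \<open>closed C\<close>] by blast
    have "s k \<in> C" for k using conv_s by (simp add: C_def)
    then have "s (r n) \<bullet> v = s (r n) \<bullet> p" for n
      using orth[of "s (r n)"] by (simp add: inner_commute inner_diff_left)
    then show ?thesis using \<open>p \<in> C\<close> by (simp add: C_def)
  qed
  then obtain u where "weak_conv_seq (s \<circ> r) u"
    using convergent_inner_imp_weak_conv[of "s \<circ> r" B] bound by auto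
  then show ?thesis using \<open>strict_mono r\<close> by blast
qed

lemma weak_cluster_points_eq:
  fixes y :: "real \<Rightarrow> 'a::real_inner"
  assumes "((\<lambda>t. norm (y t - u1)) \<longlongrightarrow> l1) at_top" "((\<lambda>t. norm (y t - u2)) \<longlongrightarrow> l2) at_top"
    and lim1: "filterlim ts1 at_top sequentially" and conv1: "weak_conv_seq (y \<circ> ts1) u1"
    and lim2: "filterlim ts2 at_top sequentially" and conv2: "weak_conv_seq (y \<circ> ts2) u2"
  shows "u1 = u2"
proof -
  have polar: "y t \<bullet> (u1 - u2) = ((norm (y t - u2))\<^sup>2 - (norm (y t - u1))\<^sup>2 + (norm u1)\<^sup>2 - (norm u2)\<^sup>2) / 2" for t
    unfolding power2_norm_eq_inner by (simp add: inner_diff inner_commute)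
  define \<alpha> where "\<alpha> = (l2\<^sup>2 - l1\<^sup>2 + (norm u1)\<^sup>2 - (norm u2)\<^sup>2) / 2"
  have "((\<lambda>t. y t \<bullet> (u1 - u2)) \<longlongrightarrow> \<alpha>) at_top"
    unfolding polar \<alpha>_def by (intro tendsto_intros assms(1,2)) simp
  then have "(\<lambda>n. y (ts1 n) \<bullet> (u1 - u2)) \<longlonglongrightarrow> \<alpha>" "(\<lambda>n. y (ts2 n) \<bullet> (u1 - u2)) \<longlonglongrightarrow> \<alpha>"
    using filterlim_compose lim1 lim2 by blast+
  then have "u1 \<bullet> (u1 - u2) = \<alpha>" "u2 \<bullet> (u1 - u2) = \<alpha>"
    using conv1 conv2 LIMSEQ_unique unfolding weak_conv_seq_def o_def by blast+
  then have "(u1 - u2) \<bullet> (u1 - u2) = 0" by (simp add: inner_diff_left)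
  then show ?thesis by simp
qed

lemma weak_cluster_point_exists:
  fixes y :: "real \<Rightarrow> 'a::{real_inner,complete_space}"
  assumes bound: "\<And>t. t \<ge> a \<Longrightarrow> norm (y t) \<le> B" and ts: "\<And>n. ts n \<ge> a + real n"
  shows "\<exists>r u. weak_conv_seq (y \<circ> (ts \<circ> r)) u \<and> filterlim (ts \<circ> r) at_top sequentially"
proof -
  have "norm ((y \<circ> ts) n) \<le> B" for n
    using bound[of "ts n"] ts[of n] by simp
  then obtain r u where "strict_mono r" "weak_conv_seq (y \<circ> ts \<circ> r) u"
    using bounded_seq_weakly_convergent_subseq by blast
  moreover have "filterlim ts at_top sequentially"
    by (rule filterlim_at_top_mono[OF filterlim_tendsto_add_at_top[OF tendsto_const[of a] filterlim_real_sequentially]])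
      (use ts in auto)
  then have "filterlim (ts \<circ> r) at_top sequentially"
    unfolding comp_def by (rule filterlim_compose[OF _ filterlim_subseq[OF \<open>strict_mono r\<close>]])
  ultimately show ?thesis by (auto simp: comp_assoc)
qed

lemma opial:
  fixes y :: "real \<Rightarrow> 'a::{real_inner,complete_space}"
  assumes bound: "\<And>t. t \<ge> a \<Longrightarrow> norm (y t) \<le> B"
    and dist_conv: "\<And>z. z \<in> S \<Longrightarrow> \<exists>l. ((\<lambda>t. norm (y t - z)) \<longlongrightarrow> l) at_top"
    and cluster_in: "\<And>ts u. filterlim ts at_top sequentially \<Longrightarrow> weak_conv_seq (y \<circ> ts) u \<Longrightarrow> u \<in> S"
  shows "\<exists>z\<in>S. weak_conv_at_top y z"
proof -
  have unique: "u1 = u2"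
    if "filterlim ts1 at_top sequentially" "weak_conv_seq (y \<circ> ts1) u1"
      and "filterlim ts2 at_top sequentially" "weak_conv_seq (y \<circ> ts2) u2" for ts1 ts2 u1 u2
    using weak_cluster_points_eq[OF _ _ that] dist_conv[OF cluster_in] that by metis
  have "\<exists>r z. weak_conv_seq (y \<circ> ((\<lambda>n. a + real n) \<circ> r)) z
      \<and> filterlim ((\<lambda>n. a + real n) \<circ> r) at_top sequentially"
    using weak_cluster_point_exists[where y = y and ts = "\<lambda>n. a + real n"] bound by blast
  then obtain r z where z: "weak_conv_seq (y \<circ> ((\<lambda>n. a + real n) \<circ> r)) z"
    and r: "filterlim ((\<lambda>n. a + real n) \<circ> r) at_top sequentially"
    by blast
  have "((\<lambda>t. y t \<bullet> v) \<longlongrightarrow> z \<bullet> v) at_top" for v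
  proof (rule ccontr)
    assume "\<not> ((\<lambda>t. y t \<bullet> v) \<longlongrightarrow> z \<bullet> v) at_top"
    then obtain e where "e > 0" and "\<not> eventually (\<lambda>t. dist (y t \<bullet> v) (z \<bullet> v) < e) at_top"
      unfolding tendsto_iff by blast
    then have "\<forall>n. \<exists>t. t \<ge> a + real n \<and> \<not> dist (y t \<bullet> v) (z \<bullet> v) < e"
      unfolding eventually_at_top_linorder by blast
    then obtain ts where ts: "\<And>n. ts n \<ge> a + real n" and far: "\<And>n. \<not> dist (y (ts n) \<bullet> v) (z \<bullet> v) < e"
      by metis
    obtain r' u where u: "weak_conv_seq (y \<circ> (ts \<circ> r')) u" and r': "filterlim (ts \<circ> r') at_top sequentially"
      using weak_cluster_point_exists[where y = y and ts = ts] bound ts by blast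
    have "u = z" using unique[OF r' u r z] .
    then have "(\<lambda>n. y (ts (r' n)) \<bullet> v) \<longlonglongrightarrow> z \<bullet> v" using u by (simp add: weak_conv_seq_def)
    then show False
      using \<open>e > 0\<close> far by (auto simp: tendsto_iff eventually_sequentially dest!: spec[of _ e])
  qed
  then show ?thesis using cluster_in[OF r z] by (auto simp: weak_conv_at_top_def)
qed

section \<open>Differential inequalities and elementary estimates\<close>

lemma nonneg_tendsto_0I:
  fixes g :: "'b \<Rightarrow> real"
  assumes "eventually (\<lambda>t. 0 \<le> g t) F" and "\<And>\<epsilon>. \<epsilon> > 0 \<Longrightarrow> eventually (\<lambda>t. g t < \<epsilon>) F"
  shows "(g \<longlongrightarrow> 0) F"
proof (rule order_tendstoI)
  show "eventually (\<lambda>t. a < g t) F" if "a < 0" for a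
    using assms(1) by (rule eventually_mono) (use that in linarith)
qed (use assms(2) in blast)

lemma derivative_le_imp_diff_le:
  fixes F G :: "real \<Rightarrow> real"
  assumes "a \<le> b" "{a..b} \<subseteq> S"
    and F: "\<And>t. a \<le> t \<Longrightarrow> t \<le> b \<Longrightarrow> (F has_real_derivative F' t) (at t within S)"
    and G: "\<And>t. a \<le> t \<Longrightarrow> t \<le> b \<Longrightarrow> (G has_real_derivative G' t) (at t within S)"
    and le: "\<And>t. a \<le> t \<Longrightarrow> t \<le> b \<Longrightarrow> F' t \<le> G' t"
  shows "F b - F a \<le> G b - G a"
proof -
  have "\<exists>t\<in>{a..b}. (F b - G b) - (F a - G a) = (\<lambda>h. (F' t - G' t) * h) (b - a)"
  proof (rule mvt_very_simple[OF \<open>a \<le> b\<close>])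
    fix t assume "a \<le> t" "t \<le> b"
    then have "((\<lambda>s. F s - G s) has_real_derivative F' t - G' t) (at t within {a..b})"
      using F G \<open>{a..b} \<subseteq> S\<close> by (intro DERIV_diff) (auto intro: DERIV_subset)
    then show "((\<lambda>s. F s - G s) has_derivative (\<lambda>h. (F' t - G' t) * h)) (at t within {a..b})"
      by (simp add: has_field_derivative_def)
  qed
  then obtain t where "t \<in> {a..b}" "(F b - G b) - (F a - G a) = (F' t - G' t) * (b - a)"
    by auto
  moreover have "(F' t - G' t) * (b - a) \<le> 0"
    using le[of t] \<open>t \<in> {a..b}\<close> \<open>a \<le> b\<close> by (simp add: mult_nonpos_nonneg)
  ultimately show ?thesis by simp
qed

lemma derivative_nonpos_imp_le:
  fixes F :: "real \<Rightarrow> real"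
  assumes "a \<le> b" "{a..b} \<subseteq> S"
    and "\<And>t. a \<le> t \<Longrightarrow> t \<le> b \<Longrightarrow> (F has_real_derivative F' t) (at t within S)"
    and "\<And>t. a \<le> t \<Longrightarrow> t \<le> b \<Longrightarrow> F' t \<le> 0"
  shows "F b \<le> F a"
  using derivative_le_imp_diff_le[where G = "\<lambda>_. 0" and G' = "\<lambda>_. 0", OF assms(1,2)] assms(3,4)
  by auto

lemma antimono_bounded_below_tendsto:
  fixes \<phi> :: "real \<Rightarrow> real"
  assumes antimono: "\<And>s t. t0 \<le> s \<Longrightarrow> s \<le> t \<Longrightarrow> \<phi> t \<le> \<phi> s"
    and bounded: "\<And>t. t0 \<le> t \<Longrightarrow> m \<le> \<phi> t"
  shows "\<exists>l. (\<phi> \<longlongrightarrow> l) at_top"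
proof -
  define l where "l = Inf (\<phi> ` {t0..})"
  have bdd: "bdd_below (\<phi> ` {t0..})" using bounded by (intro bdd_belowI[of _ m]) auto
  have "(\<phi> \<longlongrightarrow> l) at_top"
  proof (rule order_tendstoI)
    fix a assume "a < l"
    have l_le: "l \<le> \<phi> t" if "t \<ge> t0" for t unfolding l_def using bdd that by (auto intro: cInf_lower)
    show "eventually (\<lambda>t. a < \<phi> t) at_top"
      using eventually_ge_at_top[of t0] by eventually_elim (use l_le \<open>a < l\<close> in fastforce)
  next
    fix a assume "l < a"
    then obtain s where s: "s \<ge> t0" "\<phi> s < a"
      unfolding l_def by (subst (asm) cInf_less_iff) (use bdd in auto)
    show "eventually (\<lambda>t. \<phi> t < a) at_top"
      using eventually_ge_at_top[of s] by eventually_elim (use antimono s in fastforce)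
  qed
  then show ?thesis by blast
qed

text \<open>Here \<open>W\<close> is an integrating factor: \<open>(W \<phi> - c W)' \<le> W' (\<psi> - c)\<close>, so \<open>\<phi>\<close> is
  eventually dominated by any bound on \<open>\<psi>\<close>.\<close>

lemma relaxation_eventually_less:
  fixes \<phi> \<psi> W :: "real \<Rightarrow> real"
  assumes W: "\<And>t. t \<ge> t0 \<Longrightarrow> (W has_real_derivative W' t) (at t within {t0..})"
    and \<phi>: "\<And>t. t \<ge> t0 \<Longrightarrow> (\<phi> has_real_derivative \<phi>' t) (at t within {t0..})"
    and W_pos: "\<And>t. t \<ge> t0 \<Longrightarrow> W t > 0" and W'_nonneg: "\<And>t. t \<ge> t0 \<Longrightarrow> W' t \<ge> 0"
    and W_top: "filterlim W at_top at_top"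
    and relax: "\<And>t. t \<ge> t0 \<Longrightarrow> W t * \<phi>' t \<le> W' t * (\<psi> t - \<phi> t)"
    and \<psi>_le: "eventually (\<lambda>t. \<psi> t \<le> c) at_top" and "c < d"
  shows "eventually (\<lambda>t. \<phi> t < d) at_top"
proof -
  obtain T where "T \<ge> t0" and T: "\<And>t. t \<ge> T \<Longrightarrow> \<psi> t \<le> c"
    using \<psi>_le eventually_ge_at_top[of t0] unfolding eventually_at_top_linorder
    by (metis eventually_at_top_linorder max.bounded_iff nle_le)
  define K where "K = W T * \<phi> T - c * W T"
  have below: "W t * \<phi> t - c * W t \<le> K" if "t \<ge> T" for t
    unfolding K_def
  proof (rule derivative_nonpos_imp_le[OF that, of "{t0..}"])
    fix r assume "T \<le> r" "r \<le> t"
    then have "r \<ge> t0" using \<open>T \<ge> t0\<close> by simp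
    show "((\<lambda>r. W r * \<phi> r - c * W r) has_real_derivative W' r * \<phi> r + W r * \<phi>' r - c * W' r) (at r within {t0..})"
      using W[OF \<open>r \<ge> t0\<close>] \<phi>[OF \<open>r \<ge> t0\<close>] by (auto intro!: derivative_eq_intros)
    have "W' r * (\<psi> r - c) \<le> 0"
      using T[of r] W'_nonneg[OF \<open>r \<ge> t0\<close>] \<open>T \<le> r\<close> by (simp add: mult_nonneg_nonpos)
    then show "W' r * \<phi> r + W r * \<phi>' r - c * W' r \<le> 0"
      using relax[OF \<open>r \<ge> t0\<close>] by (simp add: algebra_simps)
  qed (use \<open>T \<ge> t0\<close> in auto)
  have "((\<lambda>t. K / W t) \<longlongrightarrow> 0) at_top"
    by (rule tendsto_divide_0[OF tendsto_const W_top[THEN filterlim_at_top_imp_at_infinity]])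
  then have "eventually (\<lambda>t. K / W t < d - c) at_top"
    using \<open>c < d\<close> by (intro order_tendstoD) auto
  then show ?thesis
    using eventually_ge_at_top[of T]
  proof eventually_elim
    case (elim t)
    then have "W t > 0" using W_pos \<open>T \<ge> t0\<close> by simp
    then have "\<phi> t \<le> c + K / W t" using below[OF elim(2)] by (simp add: field_simps)
    then show ?case using elim(1) by simp
  qed
qed

lemma relaxation_tendsto:
  fixes \<phi> \<psi> W :: "real \<Rightarrow> real"
  assumes W: "\<And>t. t \<ge> t0 \<Longrightarrow> (W has_real_derivative W' t) (at t within {t0..})"
    and \<phi>: "\<And>t. t \<ge> t0 \<Longrightarrow> (\<phi> has_real_derivative \<phi>' t) (at t within {t0..})"
    and W_pos: "\<And>t. t \<ge> t0 \<Longrightarrow> W t > 0" and W'_nonneg: "\<And>t. t \<ge> t0 \<Longrightarrow> W' t \<ge> 0"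
    and W_top: "filterlim W at_top at_top"
    and relax: "\<And>t. t \<ge> t0 \<Longrightarrow> W t * \<phi>' t = W' t * (\<psi> t - \<phi> t)"
    and \<psi>: "(\<psi> \<longlongrightarrow> l) at_top"
  shows "(\<phi> \<longlongrightarrow> l) at_top"
proof (rule order_tendstoI)
  fix d assume "l < d"
  then obtain c where "l < c" "c < d" using dense by blast
  have \<psi>_le: "eventually (\<lambda>t. \<psi> t \<le> c) at_top"
    using order_tendstoD(2)[OF \<psi> \<open>l < c\<close>] by (auto elim: eventually_mono)
  show "eventually (\<lambda>t. \<phi> t < d) at_top"
    by (rule relaxation_eventually_less[OF W \<phi> W_pos W'_nonneg W_top _ \<psi>_le \<open>c < d\<close>]) (use relax in auto)
next
  fix d assume "d < l"
  then obtain c where "d < c" "c < l" using dense by blast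
  have "- c < - d" using \<open>d < c\<close> by simp
  have "eventually (\<lambda>t. - \<phi> t < - d) at_top"
  proof (rule relaxation_eventually_less[OF W _ W_pos W'_nonneg W_top _ _ \<open>- c < - d\<close>])
    show "((\<lambda>t. - \<phi> t) has_real_derivative - \<phi>' t) (at t within {t0..})" if "t \<ge> t0" for t
      using \<phi>[OF that] by (rule DERIV_minus)
    show "W t * - \<phi>' t \<le> W' t * (- \<psi> t - - \<phi> t)" if "t \<ge> t0" for t
      using relax[OF that] by (simp add: algebra_simps)
    show "eventually (\<lambda>t. - \<psi> t \<le> - c) at_top"
      using order_tendstoD(1)[OF \<psi> \<open>c < l\<close>] by (auto elim: eventually_mono)
  qed
  then show "eventually (\<lambda>t. d < \<phi> t) at_top" by simp
qed

lemma filterlim_powr_at_top: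
  fixes g :: "'b \<Rightarrow> real"
  assumes "0 < a" and g: "filterlim g at_top F"
  shows "filterlim (\<lambda>x. g x powr a) at_top F"
proof -
  have pos: "eventually (\<lambda>x. 0 < g x) F"
    using g by (simp add: filterlim_at_top_dense)
  have "((\<lambda>x. g x powr (- a)) \<longlongrightarrow> 0) F"
    using \<open>0 < a\<close> by (intro tendsto_neg_powr g) simp
  moreover have "eventually (\<lambda>x. 0 < g x powr (- a)) F"
    using pos by eventually_elim simp
  ultimately have "filterlim (\<lambda>x. inverse (g x powr (- a))) at_top F"
    by (rule filterlim_inverse_at_top)
  moreover have "eventually (\<lambda>x. inverse (g x powr (- a)) = g x powr a) F"
    using pos by eventually_elim (simp add: powr_minus)
  ultimately show ?thesis
    by (simp add: filterlim_cong)
qed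

lemma convex_gradient_inequality:
  fixes f :: "'a::real_inner \<Rightarrow> real"
  assumes convex: "convex_on UNIV f"
    and grad: "(f has_derivative (\<lambda>h. g \<bullet> h)) (at u)"
  shows "f u + g \<bullet> (v - u) \<le> f v"
proof -
  define \<phi> where "\<phi> s = f (u + s *\<^sub>R (v - u))" for s :: real
  have "((\<lambda>s. u + s *\<^sub>R (v - u)) has_derivative (\<lambda>h. h *\<^sub>R (v - u))) (at 0)"
    by (auto intro!: derivative_eq_intros)
  moreover have "(f has_derivative (\<lambda>h. g \<bullet> h)) (at (u + 0 *\<^sub>R (v - u)))"
    using grad by simp
  ultimately have "(\<phi> has_derivative (\<lambda>h. g \<bullet> (h *\<^sub>R (v - u)))) (at 0)"
    unfolding \<phi>_def by (rule has_derivative_compose)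
  then have "(\<phi> has_real_derivative g \<bullet> (v - u)) (at 0)"
    unfolding has_field_derivative_def by (rule has_derivative_eq_rhs) (auto simp: fun_eq_iff)
  then have slope: "((\<lambda>s. (\<phi> s - \<phi> 0) / (s - 0)) \<longlongrightarrow> g \<bullet> (v - u)) (at_right 0)"
    unfolding has_field_derivative_iff by (rule filterlim_mono) (auto simp: at_within_le_at)
  have "eventually (\<lambda>s. (\<phi> s - \<phi> 0) / (s - 0) \<le> f v - f u) (at_right 0)"
    unfolding eventually_at_right_field
  proof (intro exI[of _ 1] conjI allI impI)
    fix s :: real assume "0 < s" "s < 1"
    have "\<phi> s = f ((1 - s) *\<^sub>R u + s *\<^sub>R v)" by (simp add: \<phi>_def algebra_simps)
    also have "\<dots> \<le> (1 - s) * f u + s * f v"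
      using \<open>0 < s\<close> \<open>s < 1\<close> convex by (intro convex_onD) auto
    finally have "\<phi> s - \<phi> 0 \<le> s * (f v - f u)" by (simp add: \<phi>_def algebra_simps)
    then show "(\<phi> s - \<phi> 0) / (s - 0) \<le> f v - f u"
      using \<open>0 < s\<close> by (simp add: divide_le_eq mult.commute)
  qed simp
  from tendsto_le[OF _ tendsto_const slope this] show ?thesis by simp
qed

lemma powr_neg_weighted_am_gm:
  fixes k w :: real
  assumes "0 < k" "0 < w"
  shows "1 \<le> k / (1 + k) * w + w powr (- k) / (1 + k)"
proof -
  have "1 - k * (w - 1) \<le> 1 + (- k * ln w)"
    using mult_left_mono[OF ln_le_minus_one[OF \<open>0 < w\<close>], of k] \<open>0 < k\<close> by (simp add: algebra_simps)
  also have "\<dots> \<le> exp (- k * ln w)" by (rule exp_ge_add_one_self)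
  finally have "1 + k \<le> k * w + w powr (- k)"
    using \<open>0 < w\<close> by (simp add: powr_def algebra_simps)
  then have "(1 + k) / (1 + k) \<le> (k * w + w powr (- k)) / (1 + k)"
    by (rule divide_right_mono) (use \<open>0 < k\<close> in simp)
  then show ?thesis
    using \<open>0 < k\<close> by (simp add: add_divide_distrib)
qed

section \<open>Rescaled gradient flows of convex functions\<close>

locale convex_objective =
  fixes f :: "'a::{real_inner, complete_space} \<Rightarrow> real" and gradf :: "'a \<Rightarrow> 'a"
  assumes f_convex: "convex_on UNIV f"
    and f_grad: "\<And>u. (f has_derivative (\<lambda>h. gradf u \<bullet> h)) (at u)"
    and minimizer_exists: "\<exists>z. \<forall>w. f z \<le> f w"
begin

definition minimizers :: "'a set" where
  "minimizers = {z. \<forall>w. f z \<le> f w}"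

definition fmin :: real where
  "fmin = (INF w. f w)"

lemma fmin_le: "fmin \<le> f w"
proof -
  obtain z where "\<forall>w. f z \<le> f w" using minimizer_exists by blast
  then show ?thesis unfolding fmin_def by (intro cINF_lower bdd_belowI2[of _ "f z"]) auto
qed

lemma minimizer_value: "z \<in> minimizers \<Longrightarrow> f z = fmin"
  unfolding minimizers_def fmin_def by (auto intro: cInf_eq_minimum[symmetric])

lemma gradient_inequality: "f u + gradf u \<bullet> (v - u) \<le> f v"
  by (rule convex_gradient_inequality[OF f_convex f_grad])

lemma gap_le_inner_gradient: "z \<in> minimizers \<Longrightarrow> f u - fmin \<le> (u - z) \<bullet> gradf u"
  using gradient_inequality[of u z] minimizer_value[of z]
  by (simp add: inner_diff_left inner_diff_right inner_commute)

lemma has_real_derivative_f_comp: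
  assumes "(u has_vector_derivative u') (at t within S)"
  shows "((\<lambda>s. f (u s)) has_real_derivative gradf (u t) \<bullet> u') (at t within S)"
proof -
  have "(u has_derivative (\<lambda>h. h *\<^sub>R u')) (at t within S)"
    using assms by (simp add: has_vector_derivative_def)
  from has_derivative_compose[OF this f_grad]
  show ?thesis unfolding has_field_derivative_def
    by (rule has_derivative_eq_rhs) (auto simp: fun_eq_iff)
qed

lemma weak_limit_le:
  assumes "weak_conv_seq s u" and "(\<lambda>n. f (s n)) \<longlonglongrightarrow> l"
  shows "f u \<le> l"
proof -
  have "(\<lambda>n. s n \<bullet> gradf u) \<longlonglongrightarrow> u \<bullet> gradf u"
    using assms(1) by (simp add: weak_conv_seq_def)
  then have "(\<lambda>n. f u + (s n \<bullet> gradf u - u \<bullet> gradf u)) \<longlonglongrightarrow> f u + (u \<bullet> gradf u - u \<bullet> gradf u)"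
    by (intro tendsto_add[OF tendsto_const] tendsto_diff[OF _ tendsto_const])
  then have "(\<lambda>n. f u + gradf u \<bullet> (s n - u)) \<longlonglongrightarrow> f u"
    by (simp add: inner_diff_right inner_commute)
  then show ?thesis
    using gradient_inequality by (intro LIMSEQ_le[OF _ assms(2)]) auto
qed

end

locale rescaled_gradient_flow = convex_objective +
  fixes t0 :: real and tau dtau :: "real \<Rightarrow> real" and y :: "real \<Rightarrow> 'a"
  assumes tau_deriv: "\<And>t. t \<ge> t0 \<Longrightarrow> (tau has_real_derivative dtau t) (at t within {t0..})"
    and tau_pos: "\<And>t. t \<ge> t0 \<Longrightarrow> tau t > 0"
    and dtau_pos: "\<And>t. t \<ge> t0 \<Longrightarrow> dtau t > 0"
    and y_deriv: "\<And>t. t \<ge> t0 \<Longrightarrow> (y has_vector_derivative (- dtau t *\<^sub>R gradf (y t))) (at t within {t0..})"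
begin

lemma tau_mono:
  assumes "t0 \<le> s" "s \<le> t"
  shows "tau s \<le> tau t"
proof -
  have "- tau t \<le> - tau s"
  proof (rule derivative_nonpos_imp_le[OF \<open>s \<le> t\<close>, of "{t0..}"])
    fix r assume "s \<le> r"
    then show "((\<lambda>r. - tau r) has_real_derivative - dtau r) (at r within {t0..})" "- dtau r \<le> 0"
      using tau_deriv[of r] dtau_pos[of r] \<open>t0 \<le> s\<close> by (auto intro: DERIV_minus)
  qed (use \<open>t0 \<le> s\<close> in auto)
  then show ?thesis by simp
qed

lemma f_y_deriv:
  "t \<ge> t0 \<Longrightarrow> ((\<lambda>s. f (y s)) has_real_derivative - dtau t * (norm (gradf (y t)))\<^sup>2) (at t within {t0..})"
  using has_real_derivative_f_comp[OF y_deriv] by (simp add: power2_norm_eq_inner)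

lemma dist_y_deriv:
  assumes "t \<ge> t0"
  shows "((\<lambda>s. (norm (y s - z))\<^sup>2 / 2) has_real_derivative - dtau t * ((y t - z) \<bullet> gradf (y t))) (at t within {t0..})"
proof -
  have "((\<lambda>s. y s - z) has_vector_derivative - dtau t *\<^sub>R gradf (y t)) (at t within {t0..})"
    using y_deriv[OF assms] by (auto intro!: derivative_eq_intros)
  from bounded_bilinear.has_vector_derivative[OF bounded_bilinear_inner this this]
  have "((\<lambda>s. (y s - z) \<bullet> (y s - z)) has_real_derivative 2 * (- dtau t * ((y t - z) \<bullet> gradf (y t)))) (at t within {t0..})"
    by (simp add: has_real_derivative_iff_has_vector_derivative inner_commute)
  then show ?thesis
    unfolding power2_norm_eq_inner by (auto intro!: derivative_eq_intros)
qed

lemma dist_minimizer_antimono: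
  assumes "z \<in> minimizers" "t0 \<le> s" "s \<le> t"
  shows "norm (y t - z) \<le> norm (y s - z)"
proof -
  have "(norm (y t - z))\<^sup>2 / 2 \<le> (norm (y s - z))\<^sup>2 / 2"
  proof (rule derivative_nonpos_imp_le[OF \<open>s \<le> t\<close> _ dist_y_deriv])
    fix r assume "s \<le> r"
    then have "0 \<le> dtau r" "0 \<le> (y r - z) \<bullet> gradf (y r)"
      using dtau_pos[of r] fmin_le[of "y r"] gap_le_inner_gradient[OF \<open>z \<in> minimizers\<close>, of "y r"] \<open>t0 \<le> s\<close>
      by auto
    then show "- dtau r * ((y r - z) \<bullet> gradf (y r)) \<le> 0" by simp
  qed (use \<open>t0 \<le> s\<close> in auto)
  then show ?thesis by (simp add: power2_le_iff_abs_le)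
qed

text \<open>The offset \<open>c\<close> makes \<open>energy c z\<close> nonincreasing from the time on at which \<open>tau\<close> exceeds
  \<open>c\<close>; for \<open>c = 0\<close> it is the usual Lyapunov function.\<close>

definition energy :: "real \<Rightarrow> 'a \<Rightarrow> real \<Rightarrow> real" where
  "energy c z t = (tau t - c) * (f (y t) - fmin) + (norm (y t - z))\<^sup>2 / 2"

definition energy_rate :: "real \<Rightarrow> 'a \<Rightarrow> real \<Rightarrow> real" where
  "energy_rate c z t = dtau t * (f (y t) - fmin) - (tau t - c) * dtau t * (norm (gradf (y t)))\<^sup>2
     - dtau t * ((y t - z) \<bullet> gradf (y t))"

lemma energy_deriv:
  assumes "t \<ge> t0"
  shows "(energy c z has_real_derivative energy_rate c z t) (at t within {t0..})"
  unfolding energy_def[abs_def] energy_rate_def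
  by (rule DERIV_cong[OF DERIV_add[OF DERIV_mult[OF DERIV_diff[OF tau_deriv[OF assms] DERIV_const]
        DERIV_diff[OF f_y_deriv[OF assms] DERIV_const]] dist_y_deriv[OF assms]]])
    (simp add: algebra_simps)

lemma energy_rate_le:
  assumes "z \<in> minimizers" "t \<ge> t0"
  shows "energy_rate c z t \<le> - (tau t - c) * dtau t * (norm (gradf (y t)))\<^sup>2"
  using mult_left_mono[OF gap_le_inner_gradient[OF assms(1), of "y t"] less_imp_le[OF dtau_pos[OF assms(2)]]]
  by (simp add: energy_rate_def algebra_simps)

lemma energy_antimono:
  assumes "z \<in> minimizers" "t0 \<le> s" "s \<le> t" "c \<le> tau s"
  shows "energy c z t \<le> energy c z s"
proof (rule derivative_nonpos_imp_le[OF \<open>s \<le> t\<close> _ energy_deriv])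
  fix r assume "s \<le> r"
  then have "r \<ge> t0" "c \<le> tau r" using assms tau_mono[of s r] by auto
  then have "0 \<le> (tau r - c) * dtau r * (norm (gradf (y r)))\<^sup>2"
    using dtau_pos[of r] by simp
  then show "energy_rate c z r \<le> 0"
    using energy_rate_le[OF \<open>z \<in> minimizers\<close> \<open>r \<ge> t0\<close>, of c] by linarith
qed (use assms in auto)

lemma scaled_gap_le_energy:
  assumes "z \<in> minimizers" "t \<ge> t0"
  shows "tau t * (f (y t) - fmin) \<le> energy 0 z t0"
proof -
  have "tau t * (f (y t) - fmin) \<le> energy 0 z t" by (simp add: energy_def)
  also have "\<dots> \<le> energy 0 z t0"
    using energy_antimono[OF assms(1) order_refl assms(2)] tau_pos[of t0] by simp
  finally show ?thesis .
qed

lemma minimizer_dist_tendsto: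
  assumes "z \<in> minimizers"
  shows "\<exists>l. ((\<lambda>t. norm (y t - z)) \<longlongrightarrow> l) at_top"
  using antimono_bounded_below_tendsto[of t0 "\<lambda>t. norm (y t - z)" 0]
    dist_minimizer_antimono[OF assms] by auto

lemma scaled_gap_le:
  assumes z: "z \<in> minimizers" and "t0 \<le> s" "s \<le> t"
  shows "tau t * (f (y t) - fmin)
    \<le> (norm (y s - z))\<^sup>2 / 2 - (norm (y t - z))\<^sup>2 / 2 + tau s * energy 0 z t0 / tau t"
proof -
  have "t \<ge> t0" using assms by simp
  have "energy (tau s) z t \<le> energy (tau s) z s"
    using energy_antimono[OF z \<open>t0 \<le> s\<close> \<open>s \<le> t\<close>] by simp
  then have "(tau t - tau s) * (f (y t) - fmin) \<le> (norm (y s - z))\<^sup>2 / 2 - (norm (y t - z))\<^sup>2 / 2"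
    by (simp add: energy_def)
  moreover have "tau s * (f (y t) - fmin) \<le> tau s * energy 0 z t0 / tau t"
  proof -
    have "tau s * (f (y t) - fmin) = tau s * (tau t * (f (y t) - fmin)) / tau t"
      using tau_pos[OF \<open>t \<ge> t0\<close>] by simp
    also have "\<dots> \<le> tau s * energy 0 z t0 / tau t"
      using scaled_gap_le_energy[OF z \<open>t \<ge> t0\<close>] tau_pos[OF \<open>t0 \<le> s\<close>] tau_pos[OF \<open>t \<ge> t0\<close>]
      by (intro divide_right_mono mult_left_mono) auto
    finally show ?thesis .
  qed
  ultimately show ?thesis by (simp add: left_diff_distrib)
qed

lemma scaled_gap_tendsto_0:
  assumes tau_top: "filterlim tau at_top at_top"
  shows "((\<lambda>t. tau t * (f (y t) - fmin)) \<longlongrightarrow> 0) at_top"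
proof (rule nonneg_tendsto_0I)
  show "eventually (\<lambda>t. 0 \<le> tau t * (f (y t) - fmin)) at_top"
    using eventually_ge_at_top[of t0] by eventually_elim (use tau_pos fmin_le in \<open>simp add: less_imp_le\<close>)
  fix \<epsilon> :: real assume "0 < \<epsilon>"
  obtain z where z: "z \<in> minimizers" using minimizer_exists by (auto simp: minimizers_def)
  obtain l where l: "((\<lambda>t. norm (y t - z)) \<longlongrightarrow> l) at_top"
    using minimizer_dist_tendsto[OF z] by blast
  have "0 \<le> l" by (rule tendsto_lowerbound[OF l]) auto
  have l_le: "l\<^sup>2 / 2 \<le> (norm (y t - z))\<^sup>2 / 2" if "t \<ge> t0" for t
  proof -
    have "eventually (\<lambda>r. norm (y r - z) \<le> norm (y t - z)) at_top"
      using eventually_ge_at_top[of t] by eventually_elim (rule dist_minimizer_antimono[OF z that])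
    then have "l \<le> norm (y t - z)" by (intro tendsto_upperbound[OF l]) simp_all
    then show ?thesis using \<open>0 \<le> l\<close> by (simp add: power_mono)
  qed
  have "((\<lambda>t. (norm (y t - z))\<^sup>2 / 2) \<longlongrightarrow> l\<^sup>2 / 2) at_top"
    by (intro tendsto_divide[OF tendsto_power[OF l] tendsto_const]) simp
  then have "eventually (\<lambda>s. (norm (y s - z))\<^sup>2 / 2 < l\<^sup>2 / 2 + \<epsilon> / 2) at_top"
    by (rule order_tendstoD) (use \<open>0 < \<epsilon>\<close> in simp)
  then obtain s where "s \<ge> t0" and s: "(norm (y s - z))\<^sup>2 / 2 < l\<^sup>2 / 2 + \<epsilon> / 2"
    unfolding eventually_at_top_linorder by (metis max.cobounded1 max.cobounded2)
  define K where "K = 2 * tau s * \<bar>energy 0 z t0\<bar> / \<epsilon>"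
  have "eventually (\<lambda>t. K < tau t) at_top"
    using tau_top by (simp add: filterlim_at_top_dense)
  then show "eventually (\<lambda>t. tau t * (f (y t) - fmin) < \<epsilon>) at_top"
    using eventually_ge_at_top[of s]
  proof eventually_elim
    case (elim t)
    then have "t \<ge> t0" using \<open>s \<ge> t0\<close> by simp
    have "tau s * energy 0 z t0 / tau t < \<epsilon> / 2"
      using elim(1) tau_pos[OF \<open>t \<ge> t0\<close>] tau_pos[OF \<open>s \<ge> t0\<close>] \<open>0 < \<epsilon>\<close>
      by (simp add: K_def field_simps) (smt (verit) abs_ge_self mult_left_mono)
    then show ?case
      using scaled_gap_le[OF z \<open>s \<ge> t0\<close> \<open>s \<le> t\<close>] s l_le[OF \<open>t \<ge> t0\<close>] by linarith
  qed
qed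

lemma f_y_tendsto:
  assumes tau_top: "filterlim tau at_top at_top"
  shows "((\<lambda>t. f (y t)) \<longlongrightarrow> fmin) at_top"
proof -
  have "((\<lambda>t. tau t * (f (y t) - fmin) * inverse (tau t)) \<longlongrightarrow> 0 * 0) at_top"
    by (intro tendsto_mult scaled_gap_tendsto_0 tendsto_inverse_0_at_top tau_top)
  moreover have "eventually (\<lambda>t. tau t * (f (y t) - fmin) * inverse (tau t) = f (y t) - fmin) at_top"
    using eventually_ge_at_top[of t0]
  proof eventually_elim
    case (elim t)
    then show ?case using tau_pos[OF elim] by simp
  qed
  ultimately have "((\<lambda>t. f (y t) - fmin) \<longlongrightarrow> 0) at_top"
    by (simp add: tendsto_cong)
  then show ?thesis by (simp add: LIM_zero_iff)
qed

lemma y_weak_conv: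
  assumes tau_top: "filterlim tau at_top at_top"
  shows "\<exists>z\<in>minimizers. weak_conv_at_top y z"
proof -
  obtain z where z: "z \<in> minimizers" using minimizer_exists by (auto simp: minimizers_def)
  have "norm (y t) \<le> norm z + norm (y t0 - z)" if "t \<ge> t0" for t
    using dist_minimizer_antimono[OF z order_refl that] norm_triangle_ineq[of "y t - z" z] by simp
  moreover have "u \<in> minimizers" if "filterlim ts at_top sequentially" "weak_conv_seq (y \<circ> ts) u" for ts u
  proof -
    have "(\<lambda>n. f (y (ts n))) \<longlonglongrightarrow> fmin"
      using filterlim_compose[OF f_y_tendsto[OF tau_top] that(1)] .
    then have "f u \<le> fmin" using weak_limit_le[OF that(2)] by (simp add: o_def)
    then show ?thesis using fmin_le order_trans by (auto simp: minimizers_def)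
  qed
  ultimately show ?thesis using opial minimizer_dist_tendsto by blast
qed

end

section \<open>The closed-loop time scaling\<close>

locale closed_loop_time_scaling = convex_objective +
  fixes t0 q p \<gamma> :: real
    and x x' x'' :: "real \<Rightarrow> 'a"
    and lam lam' tau dtau ddtau :: "real \<Rightarrow> real"
  assumes t0_pos: "t0 > 0" and q_pos: "q > 0" and p_ge: "p \<ge> 1" and gamma_gt: "\<gamma> > 1"
    and x_d1: "\<And>t. t \<ge> t0 \<Longrightarrow> (x has_vector_derivative x' t) (at t within {t0..})"
    and x_d2: "\<And>t. t \<ge> t0 \<Longrightarrow> (x' has_vector_derivative x'' t) (at t within {t0..})"
    and lam_pos: "\<And>t. t \<ge> t0 \<Longrightarrow> lam t > 0"
    and lam_d: "\<And>t. t \<ge> t0 \<Longrightarrow> (lam has_real_derivative lam' t) (at t within {t0..})"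
    and tau_def: "\<And>t. tau t = (1 / q powr q) *
          (t0 + integral {t0..t} (\<lambda>r. lam r powr (1 / q))) powr q"
    and tau_d1: "\<And>t. t \<ge> t0 \<Longrightarrow> (tau has_real_derivative dtau t) (at t within {t0..})"
    and tau_d2: "\<And>t. t \<ge> t0 \<Longrightarrow> (dtau has_real_derivative ddtau t) (at t within {t0..})"
    and ode: "\<And>t. t \<ge> t0 \<Longrightarrow>
          x'' t + (((1 + \<gamma>) * (dtau t)\<^sup>2 - tau t * ddtau t) / (tau t * dtau t)) *\<^sub>R x' t
          + (\<gamma> * (dtau t)\<^sup>2 / tau t) *\<^sub>R gradf (x t + ((1 / \<gamma>) * (tau t / dtau t)) *\<^sub>R x' t) = 0"
    and coupling: "\<And>t. t \<ge> t0 \<Longrightarrow>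
          lam t powr p * \<bar>dtau t\<bar> powr (p - 1) *
          (if p = 1 then 1
           else norm (gradf (x t + ((1 / \<gamma>) * (tau t / dtau t)) *\<^sub>R x' t)) powr (p - 1)) = 1"
begin

definition Lam :: "real \<Rightarrow> real" where
  "Lam t = t0 + integral {t0..t} (\<lambda>r. lam r powr (1 / q))"

lemma tau_Lam: "tau t = Lam t powr q / q powr q"
  by (simp add: tau_def Lam_def)

lemma lam_powr_continuous: "continuous_on {t0..} (\<lambda>r. lam r powr (1 / q))"
proof -
  have "continuous_on {t0..} lam"
    using lam_d by (auto simp: continuous_on_eq_continuous_within intro: DERIV_continuous)
  then show ?thesis
    by (intro continuous_intros) (force dest: lam_pos)+
qed

lemma Lam_deriv:
  assumes "t \<ge> t0"
  shows "(Lam has_real_derivative lam t powr (1 / q)) (at t within {t0..})"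
proof -
  have "((\<lambda>s. integral {t0..s} (\<lambda>r. lam r powr (1 / q))) has_real_derivative lam t powr (1 / q))
      (at t within {t0..t + 1})"
    using assms by (intro integral_has_real_derivative continuous_on_subset[OF lam_powr_continuous]) auto
  moreover have "at t within {t0..t + 1} = at t within {t0..}"
    by (rule at_within_nhd[where S = "{..<t + 1}"]) (use assms in auto)
  ultimately show ?thesis
    unfolding Lam_def[abs_def] by (auto intro!: derivative_eq_intros)
qed

lemma Lam_pos: "t \<ge> t0 \<Longrightarrow> Lam t > 0"
  using t0_pos unfolding Lam_def
  by (auto intro!: add_pos_nonneg integral_nonneg integrable_continuous_real
      continuous_on_subset[OF lam_powr_continuous])

lemma tau_deriv_Lam:
  assumes "t \<ge> t0"
  shows "dtau t = q * Lam t powr (q - 1) * lam t powr (1 / q) / q powr q"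
proof -
  have "((\<lambda>s. Lam s powr q / q powr q) has_real_derivative q * Lam t powr (q - 1) * lam t powr (1 / q) / q powr q)
      (at t within {t0..})"
    using Lam_deriv[OF assms] Lam_pos[OF assms] q_pos by (auto intro!: derivative_eq_intros)
  moreover have "at t within {t0..} \<noteq> bot"
    using islimpt_subset[of t "{t0..t + 1}" "{t0..}"] assms by (auto simp: trivial_limit_within)
  ultimately show ?thesis
    using tau_d1[OF assms] unfolding tau_Lam[abs_def] by (rule has_field_derivative_unique[rotated])
qed

lemma tau_pos: "t \<ge> t0 \<Longrightarrow> tau t > 0"
  using Lam_pos[of t] q_pos by (simp add: tau_Lam)

lemma dtau_pos: "t \<ge> t0 \<Longrightarrow> dtau t > 0"
  using Lam_pos[of t] q_pos lam_pos[of t] by (simp add: tau_deriv_Lam)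

definition y :: "real \<Rightarrow> 'a" where
  "y t = x t + ((1 / \<gamma>) * (tau t / dtau t)) *\<^sub>R x' t"

lemma x'_eq: "t \<ge> t0 \<Longrightarrow> x' t = (\<gamma> * dtau t / tau t) *\<^sub>R (y t - x t)"
  using tau_pos[of t] dtau_pos[of t] gamma_gt by (simp add: y_def)

lemma y_deriv:
  assumes "t \<ge> t0"
  shows "(y has_vector_derivative - dtau t *\<^sub>R gradf (y t)) (at t within {t0..})"
proof -
  have "tau t > 0" "dtau t > 0" "\<gamma> > 0" using tau_pos dtau_pos gamma_gt assms by auto
  define b where "b s = (1 / \<gamma>) * (tau s / dtau s)" for s
  define b' where "b' = (1 / \<gamma>) * ((dtau t * dtau t - tau t * ddtau t) / (dtau t * dtau t))"
  define a where "a = ((1 + \<gamma>) * (dtau t)\<^sup>2 - tau t * ddtau t) / (tau t * dtau t)"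
  have "(b has_real_derivative b') (at t within {t0..})"
    unfolding b_def b'_def using tau_d1[OF assms] tau_d2[OF assms] \<open>dtau t > 0\<close> \<open>\<gamma> > 0\<close>
    by (auto intro!: derivative_eq_intros simp: field_simps)
  then have "(y has_vector_derivative x' t + (b t *\<^sub>R x'' t + b' *\<^sub>R x' t)) (at t within {t0..})"
    unfolding y_def[abs_def] b_def[symmetric]
    by (intro has_vector_derivative_add x_d1 has_vector_derivative_scaleR x_d2 assms)
  moreover have "x' t + (b t *\<^sub>R x'' t + b' *\<^sub>R x' t) = - dtau t *\<^sub>R gradf (y t)"
  proof -
    have x''_eq: "x'' t = - (a *\<^sub>R x' t) - (\<gamma> * (dtau t)\<^sup>2 / tau t) *\<^sub>R gradf (y t)"
      using ode[OF assms] unfolding a_def y_def by (simp add: eq_neg_iff_add_eq_0 algebra_simps)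
    have "x' t + (b t *\<^sub>R x'' t + b' *\<^sub>R x' t)
        = (1 + b' - b t * a) *\<^sub>R x' t - (b t * (\<gamma> * (dtau t)\<^sup>2 / tau t)) *\<^sub>R gradf (y t)"
      unfolding x''_eq by (simp add: algebra_simps)
    moreover have "1 + b' - b t * a = 0" "b t * (\<gamma> * (dtau t)\<^sup>2 / tau t) = dtau t"
      using \<open>tau t > 0\<close> \<open>dtau t > 0\<close> \<open>\<gamma> > 0\<close> unfolding b_def b'_def a_def
      by (simp_all add: field_simps power2_eq_square)
    ultimately show ?thesis by simp
  qed
  ultimately show ?thesis by simp
qed

sublocale rescaled_gradient_flow f gradf t0 tau dtau y
  by unfold_locales (fact tau_d1 tau_pos dtau_pos y_deriv)+

text \<open>\<open>kappa\<close> is chosen such that the coupling law makes \<open>(Lam ^ (1 - kappa))'\<close> a multiple of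
  \<open>dissipation ^ (- kappa)\<close>, see \<open>Lam_powr_deriv\<close>.\<close>

definition kappa :: real where
  "kappa = (p - 1) / (p - 1 + 2 * p * q)"

definition dissipation :: "real \<Rightarrow> real" where
  "dissipation t = tau t * dtau t * (norm (gradf (y t)))\<^sup>2"

lemma kappa_denominator_pos: "p > 1 \<Longrightarrow> p - 1 + 2 * p * q > 0"
  using q_pos by (simp add: add_pos_pos)

lemma kappa_bounds: "p > 1 \<Longrightarrow> 0 < kappa \<and> kappa < 1"
  using kappa_denominator_pos q_pos by (simp add: kappa_def divide_less_eq_1_pos)

lemma kappa_exponent:
  assumes "p > 1"
  shows "kappa * (1 / q + 2 * p / (p - 1)) = 1 / q"
proof -
  have "1 / q + 2 * p / (p - 1) = (p - 1 + 2 * p * q) / (q * (p - 1))"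
    using q_pos assms by (simp add: field_simps)
  then show ?thesis
    using kappa_denominator_pos[OF assms] assms by (simp add: kappa_def)
qed

lemma coupling_gt1:
  assumes "p > 1" "t \<ge> t0"
  shows "lam t powr p * dtau t powr (p - 1) * norm (gradf (y t)) powr (p - 1) = 1"
  using coupling[OF assms(2)] assms(1) dtau_pos[OF assms(2)] by (simp add: y_def)

lemma grad_y_nonzero: "p > 1 \<Longrightarrow> t \<ge> t0 \<Longrightarrow> gradf (y t) \<noteq> 0"
  using coupling_gt1 by fastforce

lemma dissipation_pos: "p > 1 \<Longrightarrow> t \<ge> t0 \<Longrightarrow> dissipation t > 0"
  using tau_pos dtau_pos grad_y_nonzero by (simp add: dissipation_def)

lemma ln_dissipation:
  assumes "p > 1" "t \<ge> t0"
  shows "ln (dissipation t) = ln (Lam t) - ln q - (1 / q + 2 * p / (p - 1)) * ln (lam t)"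
proof -
  have G: "norm (gradf (y t)) > 0" using grad_y_nonzero[OF assms] by simp
  have "p * ln (lam t) + (p - 1) * ln (dtau t) + (p - 1) * ln (norm (gradf (y t))) = 0"
    using arg_cong[OF coupling_gt1[OF assms], of ln] lam_pos[OF assms(2)] dtau_pos[OF assms(2)] G
    by (simp add: ln_mult ln_powr)
  then have "2 * ln (norm (gradf (y t))) = - (2 * p / (p - 1)) * ln (lam t) - 2 * ln (dtau t)"
    using assms(1) by (simp add: field_simps)
  moreover have "ln (dissipation t) = ln (tau t) + ln (dtau t) + 2 * ln (norm (gradf (y t)))"
    using tau_pos[OF assms(2)] dtau_pos[OF assms(2)] G
    by (simp add: dissipation_def ln_mult ln_realpow)
  ultimately have "ln (dissipation t) = ln (tau t) - ln (dtau t) - (2 * p / (p - 1)) * ln (lam t)"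
    by linarith
  also have "\<dots> = (q * ln (Lam t) - q * ln q)
      - (ln q + (q - 1) * ln (Lam t) + (1 / q) * ln (lam t) - q * ln q) - (2 * p / (p - 1)) * ln (lam t)"
    using Lam_pos[OF assms(2)] q_pos lam_pos[OF assms(2)]
    by (simp add: tau_Lam tau_deriv_Lam[OF assms(2)] ln_mult ln_div ln_powr)
  also have "\<dots> = ln (Lam t) - ln q - (1 / q + 2 * p / (p - 1)) * ln (lam t)"
    by (simp add: algebra_simps)
  finally show ?thesis .
qed

lemma dissipation_powr_kappa:
  assumes "p > 1" "t \<ge> t0"
  shows "dissipation t powr (- kappa) = q powr kappa * Lam t powr (- kappa) * lam t powr (1 / q)"
proof (rule ln_inj_iff[THEN iffD1])
  have "ln (dissipation t powr (- kappa)) = - kappa * ln (dissipation t)"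
    using dissipation_pos[OF assms] by (simp add: ln_powr)
  also have "\<dots> = kappa * ln q - kappa * ln (Lam t) + (kappa * (1 / q + 2 * p / (p - 1))) * ln (lam t)"
    unfolding ln_dissipation[OF assms] by (simp add: algebra_simps)
  also have "\<dots> = ln (q powr kappa * Lam t powr (- kappa) * lam t powr (1 / q))"
    using q_pos Lam_pos[OF assms(2)] lam_pos[OF assms(2)] by (simp add: kappa_exponent[OF assms(1)] ln_mult ln_powr)
  finally show "ln (dissipation t powr (- kappa)) = ln (q powr kappa * Lam t powr (- kappa) * lam t powr (1 / q))" .
qed (use dissipation_pos[OF assms] q_pos Lam_pos[OF assms(2)] lam_pos[OF assms(2)] in simp_all)

lemma Lam_powr_deriv:
  assumes "p > 1" "t \<ge> t0"
  shows "((\<lambda>s. Lam s powr (1 - kappa)) has_real_derivative (1 - kappa) * (q * dissipation t) powr (- kappa))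
    (at t within {t0..})"
proof -
  have "((\<lambda>s. Lam s powr (1 - kappa)) has_real_derivative (1 - kappa) * (Lam t powr (- kappa) * lam t powr (1 / q)))
      (at t within {t0..})"
    using Lam_deriv[OF assms(2)] Lam_pos[OF assms(2)] by (auto intro!: derivative_eq_intros)
  moreover have "(q * dissipation t) powr (- kappa) = Lam t powr (- kappa) * lam t powr (1 / q)"
  proof -
    have "(q * dissipation t) powr (- kappa) = q powr (- kappa) * dissipation t powr (- kappa)"
      using q_pos dissipation_pos[OF assms] by (simp add: powr_mult)
    also have "\<dots> = q powr (- kappa) * (q powr kappa * Lam t powr (- kappa) * lam t powr (1 / q))"
      by (simp only: dissipation_powr_kappa[OF assms])
    also have "\<dots> = Lam t powr (- kappa) * lam t powr (1 / q)"
      using q_pos by (simp add: powr_minus)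
    finally show ?thesis .
  qed
  ultimately show ?thesis by simp
qed

lemma elapsed_time_bound:
  assumes "p > 1" "z \<in> minimizers" "\<epsilon> > 0" "t \<ge> t0"
  shows "t - t0 \<le> kappa / (1 + kappa) * \<epsilon> * energy 0 z t0
           + q powr kappa / ((1 + kappa) * (1 - kappa)) * \<epsilon> powr (- kappa) * Lam t powr (1 - kappa)"
proof -
  have "0 < kappa" "kappa < 1" using kappa_bounds[OF assms(1)] by auto
  define \<theta> where "\<theta> = kappa / (1 + kappa)"
  define c where "c = q powr kappa / ((1 + kappa) * (1 - kappa)) * \<epsilon> powr (- kappa)"
  have "(t - c * Lam t powr (1 - kappa)) - (t0 - c * Lam t0 powr (1 - kappa))
      \<le> - (\<theta> * \<epsilon> * energy 0 z t) - - (\<theta> * \<epsilon> * energy 0 z t0)"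
  proof (rule derivative_le_imp_diff_le[OF \<open>t \<ge> t0\<close>, of "{t0..}"])
    fix r assume "t0 \<le> r"
    define X where "X = dissipation r"
    have "X > 0" using dissipation_pos[OF assms(1) \<open>t0 \<le> r\<close>] by (simp add: X_def)
    show "((\<lambda>r. r - c * Lam r powr (1 - kappa)) has_real_derivative
        1 - c * ((1 - kappa) * (q * X) powr (- kappa))) (at r within {t0..})"
      using DERIV_diff[OF DERIV_ident DERIV_cmult[OF Lam_powr_deriv[OF assms(1) \<open>t0 \<le> r\<close>], of c]]
      by (simp add: X_def)
    show "((\<lambda>r. - (\<theta> * \<epsilon> * energy 0 z r)) has_real_derivative - (\<theta> * \<epsilon> * energy_rate 0 z r))
        (at r within {t0..})"
      by (intro DERIV_minus DERIV_cmult energy_deriv \<open>t0 \<le> r\<close>)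
    have c_eq: "c * (1 - kappa) = \<epsilon> powr (- kappa) / (1 + kappa) * q powr kappa"
      using \<open>kappa < 1\<close> by (simp add: c_def)
    have q_cancel: "q powr kappa * (q * X) powr (- kappa) = X powr (- kappa)"
      using q_pos \<open>X > 0\<close> by (simp add: powr_mult powr_minus)
    have "c * ((1 - kappa) * (q * X) powr (- kappa)) = \<epsilon> powr (- kappa) / (1 + kappa) * (q powr kappa * (q * X) powr (- kappa))"
      by (simp only: mult.assoc[symmetric] c_eq)
    also have "\<dots> = (\<epsilon> * X) powr (- kappa) / (1 + kappa)"
      unfolding q_cancel using assms(3) \<open>X > 0\<close> by (simp add: powr_mult)
    finally have "c * ((1 - kappa) * (q * X) powr (- kappa)) = (\<epsilon> * X) powr (- kappa) / (1 + kappa)" .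
    moreover have "1 - (\<epsilon> * X) powr (- kappa) / (1 + kappa) \<le> \<theta> * \<epsilon> * X"
      using powr_neg_weighted_am_gm[OF \<open>0 < kappa\<close>, of "\<epsilon> * X"] assms(3) \<open>X > 0\<close>
      by (simp add: \<theta>_def mult.assoc)
    moreover have "energy_rate 0 z r \<le> - X"
      using energy_rate_le[OF assms(2) \<open>t0 \<le> r\<close>, of 0] by (simp add: X_def dissipation_def)
    then have "\<theta> * \<epsilon> * X \<le> \<theta> * \<epsilon> * (- energy_rate 0 z r)"
      using \<open>0 < kappa\<close> assms(3) by (intro mult_left_mono) (auto simp: \<theta>_def)
    ultimately show "1 - c * ((1 - kappa) * (q * X) powr (- kappa)) \<le> - (\<theta> * \<epsilon> * energy_rate 0 z r)"
      by simp
  qed auto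
  moreover have "0 \<le> \<theta> * \<epsilon> * energy 0 z t"
    using \<open>0 < kappa\<close> assms(3) tau_pos[OF assms(4)] fmin_le[of "y t"] by (simp add: \<theta>_def energy_def)
  moreover have "0 \<le> c * Lam t0 powr (1 - kappa)"
    using \<open>kappa < 1\<close> \<open>0 < kappa\<close> by (simp add: c_def)
  ultimately have "t - t0 \<le> \<theta> * \<epsilon> * energy 0 z t0 + c * Lam t powr (1 - kappa)"
    by linarith
  then show ?thesis by (simp add: c_def \<theta>_def)
qed

lemma Lam_powr_lower_bound:
  assumes "p > 1"
  shows "\<exists>N>0. \<forall>t\<ge>t0. (t - t0) powr (1 + kappa) \<le> N * Lam t powr (1 - kappa)"
proof -
  have "0 < kappa" "kappa < 1" using kappa_bounds[OF assms] by auto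
  obtain z where z: "z \<in> minimizers" using minimizer_exists by (auto simp: minimizers_def)
  define E where "E = energy 0 z t0"
  define B where "B = kappa / (1 + kappa) * (\<bar>E\<bar> + 1)"
  define A where "A = 2 * B"
  define M where "M = q powr kappa / ((1 + kappa) * (1 - kappa))"
  have "B > 0" "A > 0" "M > 0" using \<open>0 < kappa\<close> \<open>kappa < 1\<close> q_pos by (auto simp: A_def B_def M_def)
  have "(t - t0) powr (1 + kappa) \<le> (2 * M * A powr kappa) * Lam t powr (1 - kappa)" if "t \<ge> t0" for t
  proof (cases "t = t0")
    case True
    then show ?thesis using \<open>M > 0\<close> by simp
  next
    case False
    define s where "s = t - t0"
    have "s > 0" using False that by (simp add: s_def)
    have "kappa / (1 + kappa) * (s / A) * E \<le> kappa / (1 + kappa) * (s / A) * (\<bar>E\<bar> + 1)"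
      using \<open>0 < kappa\<close> \<open>s > 0\<close> \<open>A > 0\<close> by (intro mult_left_mono) auto
    also have "\<dots> = (s / A) * B"
      by (simp add: B_def mult_ac)
    also have "\<dots> = s / 2"
      using \<open>B > 0\<close> by (simp add: A_def)
    finally have "kappa / (1 + kappa) * (s / A) * E \<le> s / 2" .
    moreover have "s \<le> kappa / (1 + kappa) * (s / A) * E + M * (s / A) powr (- kappa) * Lam t powr (1 - kappa)"
      using elapsed_time_bound[OF assms z divide_pos_pos[OF \<open>s > 0\<close> \<open>A > 0\<close>] that]
      unfolding s_def E_def M_def .
    ultimately have "s / 2 \<le> M * (s / A) powr (- kappa) * Lam t powr (1 - kappa)"
      by linarith
    also have "\<dots> = M * A powr kappa * Lam t powr (1 - kappa) * s powr (- kappa)"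
      using \<open>s > 0\<close> \<open>A > 0\<close> by (simp add: powr_divide powr_minus field_simps)
    finally have "s * s powr kappa \<le> (2 * M * A powr kappa * Lam t powr (1 - kappa)) * (s powr (- kappa) * s powr kappa)"
      using \<open>s > 0\<close> by (simp add: field_simps)
    moreover have "s powr (1 + kappa) = s * s powr kappa"
      using \<open>s > 0\<close> by (simp add: powr_add)
    ultimately show ?thesis
      using \<open>s > 0\<close> by (simp add: s_def powr_minus)
  qed
  moreover have "2 * M * A powr kappa > 0" using \<open>A > 0\<close> \<open>M > 0\<close> by simp
  ultimately show ?thesis by blast
qed

lemma kappa_rate_exponent:
  assumes "p > 1"
  shows "(1 + kappa) * (q / (1 - kappa)) = 1 + q - 1 / p"
proof -
  define D where "D = p - 1 + 2 * p * q"
  have "D \<noteq> 0" using kappa_denominator_pos[OF assms] by (simp add: D_def)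
  have "kappa * D = p - 1"
    using \<open>D \<noteq> 0\<close> by (simp add: kappa_def D_def)
  then have plus: "(1 + kappa) * D = 2 * (p - 1 + p * q)" and minus: "(1 - kappa) * D = 2 * p * q"
    by (simp_all add: algebra_simps D_def)
  have "(1 + kappa) * (q / (1 - kappa)) = q * ((1 + kappa) * D) / ((1 - kappa) * D)"
    using \<open>D \<noteq> 0\<close> by simp
  also have "\<dots> = q * (2 * (p - 1 + p * q)) / (2 * p * q)"
    unfolding plus minus ..
  also have "\<dots> = 1 + q - 1 / p"
    using q_pos assms by (simp add: field_simps)
  finally show ?thesis .
qed

lemma tau_lower_bound_gt1:
  assumes "p > 1"
  shows "\<exists>C>0. \<forall>t\<ge>t0. C * (t - t0) powr (1 + q - 1 / p) \<le> tau t"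
proof -
  have "kappa < 1" using kappa_bounds[OF assms] by auto
  obtain N where "N > 0" and N: "\<And>t. t \<ge> t0 \<Longrightarrow> (t - t0) powr (1 + kappa) \<le> N * Lam t powr (1 - kappa)"
    using Lam_powr_lower_bound[OF assms] by blast
  define r where "r = q / (1 - kappa)"
  have "r > 0" using q_pos \<open>kappa < 1\<close> by (simp add: r_def)
  have "(t - t0) powr (1 + q - 1 / p) \<le> N powr r * Lam t powr q" if "t \<ge> t0" for t
  proof -
    have "(t - t0) powr (1 + q - 1 / p) = ((t - t0) powr (1 + kappa)) powr r"
      by (simp add: powr_powr kappa_rate_exponent[OF assms, folded r_def])
    also have "\<dots> \<le> (N * Lam t powr (1 - kappa)) powr r"
      using N[OF that] \<open>r > 0\<close> by (intro powr_mono2) auto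
    also have "\<dots> = N powr r * Lam t powr q"
      using \<open>N > 0\<close> Lam_pos[OF that] \<open>kappa < 1\<close> by (simp add: powr_mult powr_powr r_def)
    finally show ?thesis .
  qed
  then have "1 / (N powr r * q powr q) * (t - t0) powr (1 + q - 1 / p) \<le> tau t" if "t \<ge> t0" for t
    using that \<open>N > 0\<close> q_pos by (simp add: tau_Lam divide_right_mono field_simps)
  moreover have "1 / (N powr r * q powr q) > 0" using \<open>N > 0\<close> q_pos by simp
  ultimately show ?thesis by blast
qed

lemma tau_lower_bound_eq1:
  assumes "p = 1"
  shows "\<exists>C>0. \<forall>t\<ge>t0. C * (t - t0) powr (1 + q - 1 / p) \<le> tau t"
proof -
  have lam_1: "lam r = 1" if "r \<ge> t0" for r
    using coupling[OF that] assms lam_pos[OF that] dtau_pos[OF that] by simp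
  have "Lam t = t" if "t \<ge> t0" for t
  proof -
    have "integral {t0..t} (\<lambda>r. lam r powr (1 / q)) = integral {t0..t} (\<lambda>_. 1 :: real)"
      by (rule integral_cong) (simp add: lam_1)
    then show ?thesis using that by (simp add: Lam_def)
  qed
  then have "1 / q powr q * (t - t0) powr (1 + q - 1 / p) \<le> tau t" if "t \<ge> t0" for t
    using that assms t0_pos q_pos by (simp add: tau_Lam divide_right_mono powr_mono2)
  moreover have "1 / q powr q > 0" using q_pos by simp
  ultimately show ?thesis by blast
qed

lemma tau_lower_bound: "\<exists>C>0. \<forall>t\<ge>t0. C * (t - t0) powr (1 + q - 1 / p) \<le> tau t"
  using tau_lower_bound_gt1 tau_lower_bound_eq1 p_ge by fastforce

lemma rate_exponent_pos: "0 < 1 + q - 1 / p"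
proof -
  have "1 / p \<le> 1" using p_ge by simp
  then show ?thesis using q_pos by simp
qed

lemma tau_at_top: "filterlim tau at_top at_top"
proof -
  obtain C where "C > 0" and C: "\<And>t. t \<ge> t0 \<Longrightarrow> C * (t - t0) powr (1 + q - 1 / p) \<le> tau t"
    using tau_lower_bound by blast
  have "filterlim (\<lambda>t. t - t0) at_top at_top"
    using filterlim_tendsto_add_at_top[OF tendsto_const[of "- t0"] filterlim_ident] by simp
  then have "filterlim (\<lambda>t. C * (t - t0) powr (1 + q - 1 / p)) at_top at_top"
    by (intro filterlim_tendsto_pos_mult_at_top[OF tendsto_const \<open>C > 0\<close>] filterlim_powr_at_top rate_exponent_pos)
  moreover have "eventually (\<lambda>t. C * (t - t0) powr (1 + q - 1 / p) \<le> tau t) at_top"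
    using eventually_ge_at_top[of t0] by eventually_elim (rule C)
  ultimately show ?thesis
    by (rule filterlim_at_top_mono)
qed

lemma tau_powr_deriv:
  "t \<ge> t0 \<Longrightarrow> ((\<lambda>s. tau s powr a) has_real_derivative a * tau t powr (a - 1) * dtau t) (at t within {t0..})"
  using tau_d1 tau_pos by (auto intro!: derivative_eq_intros)

lemma scaled_gap_x_deriv:
  "t \<ge> t0 \<Longrightarrow> ((\<lambda>s. tau s * (f (x s) - fmin)) has_real_derivative
     dtau t * (f (x t) - fmin) + tau t * (gradf (x t) \<bullet> x' t)) (at t within {t0..})"
  using tau_d1 has_real_derivative_f_comp[OF x_d1] by (auto intro!: derivative_eq_intros)

lemma scaled_gap_x_relaxation:
  assumes "t \<ge> t0"
  shows "tau t powr (\<gamma> - 1) * (dtau t * (f (x t) - fmin) + tau t * (gradf (x t) \<bullet> x' t))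
    \<le> (\<gamma> - 1) * tau t powr (\<gamma> - 1 - 1) * dtau t
        * (\<gamma> / (\<gamma> - 1) * (tau t * (f (y t) - fmin)) - tau t * (f (x t) - fmin))"
proof -
  have "tau t > 0" "dtau t > 0" using tau_pos dtau_pos assms by auto
  define P where "P = tau t powr (\<gamma> - 1)"
  have "P > 0" using \<open>tau t > 0\<close> by (simp add: P_def)
  have "tau t * (gradf (x t) \<bullet> x' t) = \<gamma> * dtau t * (gradf (x t) \<bullet> (y t - x t))"
    using \<open>tau t > 0\<close> by (simp add: x'_eq[OF assms])
  also have "\<dots> \<le> \<gamma> * dtau t * (f (y t) - f (x t))"
    using gradient_inequality[of "x t" "y t"] gamma_gt \<open>dtau t > 0\<close> by (intro mult_left_mono) auto
  finally have "P * (dtau t * (f (x t) - fmin) + tau t * (gradf (x t) \<bullet> x' t))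
      \<le> P * (dtau t * (f (x t) - fmin) + \<gamma> * dtau t * (f (y t) - f (x t)))"
    using \<open>P > 0\<close> by (intro mult_left_mono) auto
  also have "\<dots> = (\<gamma> - 1) * (P / tau t) * dtau t
      * (\<gamma> / (\<gamma> - 1) * (tau t * (f (y t) - fmin)) - tau t * (f (x t) - fmin))"
    using \<open>tau t > 0\<close> gamma_gt by (simp add: field_simps power2_eq_square)
  also have "P / tau t = tau t powr (\<gamma> - 1 - 1)"
    using \<open>tau t > 0\<close> by (simp add: P_def powr_diff power2_eq_square)
  finally show ?thesis by (simp add: P_def)
qed

lemma scaled_gap_x_tendsto_0: "((\<lambda>t. tau t * (f (x t) - fmin)) \<longlongrightarrow> 0) at_top"
proof (rule nonneg_tendsto_0I)
  show "eventually (\<lambda>t. 0 \<le> tau t * (f (x t) - fmin)) at_top"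
    using eventually_ge_at_top[of t0] by eventually_elim (use tau_pos fmin_le in \<open>simp add: less_imp_le\<close>)
  fix d :: real assume "0 < d"
  have "\<gamma> - 1 > 0" using gamma_gt by simp
  have "((\<lambda>t. \<gamma> / (\<gamma> - 1) * (tau t * (f (y t) - fmin))) \<longlongrightarrow> \<gamma> / (\<gamma> - 1) * 0) at_top"
    by (intro tendsto_mult tendsto_const scaled_gap_tendsto_0 tau_at_top)
  then have "eventually (\<lambda>t. \<gamma> / (\<gamma> - 1) * (tau t * (f (y t) - fmin)) < d / 2) at_top"
    by (rule order_tendstoD(2)) (use \<open>0 < d\<close> in simp)
  then have \<psi>_le: "eventually (\<lambda>t. \<gamma> / (\<gamma> - 1) * (tau t * (f (y t) - fmin)) \<le> d / 2) at_top"
    by (rule eventually_mono) simp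
  have "d / 2 < d" using \<open>0 < d\<close> by simp
  show "eventually (\<lambda>t. tau t * (f (x t) - fmin) < d) at_top"
  proof (rule relaxation_eventually_less[OF tau_powr_deriv scaled_gap_x_deriv _ _
        filterlim_powr_at_top[OF \<open>\<gamma> - 1 > 0\<close> tau_at_top] scaled_gap_x_relaxation \<psi>_le \<open>d / 2 < d\<close>])
    show "0 < tau t powr (\<gamma> - 1)" "0 \<le> (\<gamma> - 1) * tau t powr (\<gamma> - 1 - 1) * dtau t" if "t \<ge> t0" for t
      using tau_pos[OF that] dtau_pos[OF that] \<open>\<gamma> - 1 > 0\<close> by auto
  qed
qed

lemma x_weak_conv:
  assumes "weak_conv_at_top y z"
  shows "weak_conv_at_top x z"
  unfolding weak_conv_at_top_def
proof
  fix v
  have "\<gamma> > 0" using gamma_gt by simp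
  show "((\<lambda>t. x t \<bullet> v) \<longlongrightarrow> z \<bullet> v) at_top"
  proof (rule relaxation_tendsto[OF tau_powr_deriv _ _ _ filterlim_powr_at_top[OF \<open>\<gamma> > 0\<close> tau_at_top]])
    fix t assume "t \<ge> t0"
    have "tau t > 0" "dtau t > 0" using tau_pos dtau_pos \<open>t \<ge> t0\<close> by auto
    show "((\<lambda>t. x t \<bullet> v) has_real_derivative x' t \<bullet> v) (at t within {t0..})"
      using bounded_linear.has_vector_derivative[OF bounded_linear_inner_left x_d1[OF \<open>t \<ge> t0\<close>]]
      by (simp add: has_real_derivative_iff_has_vector_derivative)
    show "0 < tau t powr \<gamma>" "0 \<le> \<gamma> * tau t powr (\<gamma> - 1) * dtau t"
      using \<open>tau t > 0\<close> \<open>dtau t > 0\<close> \<open>\<gamma> > 0\<close> by auto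
    show "tau t powr \<gamma> * (x' t \<bullet> v) = \<gamma> * tau t powr (\<gamma> - 1) * dtau t * (y t \<bullet> v - x t \<bullet> v)"
      using \<open>tau t > 0\<close> by (simp add: x'_eq[OF \<open>t \<ge> t0\<close>] inner_diff_left powr_diff field_simps)
  qed (use assms in \<open>auto simp: weak_conv_at_top_def\<close>)
qed

lemma gap_x_smallo: "(\<lambda>t. f (x t) - fmin) \<in> o(\<lambda>t. t powr (- (1 + q - 1 / p)))"
proof -
  define e where "e = 1 + q - 1 / p"
  obtain C where "C > 0" and C: "\<And>t. t \<ge> t0 \<Longrightarrow> C * (t - t0) powr e \<le> tau t"
    using tau_lower_bound unfolding e_def by blast
  have "e > 0" using rate_exponent_pos by (simp add: e_def)
  have "(\<lambda>t. tau t * (f (x t) - fmin)) \<in> o(\<lambda>_. 1)"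
    by (rule smalloI_tendsto) (use scaled_gap_x_tendsto_0 in simp_all)
  moreover have "(\<lambda>t. inverse (tau t)) \<in> O(\<lambda>t. t powr (- e))"
  proof (rule bigoI)
    show "eventually (\<lambda>t. norm (inverse (tau t)) \<le> 2 powr e / C * norm (t powr (- e))) at_top"
      using eventually_ge_at_top[of "2 * t0"]
    proof eventually_elim
      case (elim t)
      then have "t > 0" "t \<ge> t0" using t0_pos by auto
      have "C / 2 powr e * t powr e = C * (t / 2) powr e"
        using \<open>t > 0\<close> by (simp add: powr_divide)
      also have "\<dots> \<le> C * (t - t0) powr e"
        using elim \<open>C > 0\<close> \<open>e > 0\<close> \<open>t > 0\<close> by (intro mult_left_mono powr_mono2) auto
      also have "\<dots> \<le> tau t"
        by (rule C[OF \<open>t \<ge> t0\<close>])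
      finally have "inverse (tau t) \<le> inverse (C / 2 powr e * t powr e)"
        using \<open>C > 0\<close> \<open>t > 0\<close> by (intro le_imp_inverse_le) auto
      then show ?case
        using tau_pos[OF \<open>t \<ge> t0\<close>] \<open>t > 0\<close> by (simp add: powr_minus field_simps)
    qed
  qed
  ultimately have "(\<lambda>t. tau t * (f (x t) - fmin) * inverse (tau t)) \<in> o(\<lambda>t. 1 * t powr (- e))"
    by (rule landau_o.small_big_mult)
  moreover have "eventually (\<lambda>t. tau t * (f (x t) - fmin) * inverse (tau t) = f (x t) - fmin) at_top"
    using eventually_ge_at_top[of t0]
  proof eventually_elim
    case (elim t)
    then show ?case using tau_pos[OF elim] by simp
  qed
  ultimately show ?thesis
    by (simp add: e_def landau_o.small.in_cong)
qed

end

theorem mainTheorem8: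
  fixes f :: "'a::{real_inner, complete_space} \<Rightarrow> real"
    and gradf :: "'a \<Rightarrow> 'a"
    and t0 q p \<gamma> :: real
    and x x' x'' :: "real \<Rightarrow> 'a"
    and lam lam' :: "real \<Rightarrow> real"
    and tau dtau ddtau :: "real \<Rightarrow> real"
  assumes f_convex: "convex_on UNIV f"
    and f_grad: "\<And>u. (f has_derivative (\<lambda>h. gradf u \<bullet> h)) (at u)"
    and grad_cont: "continuous_on UNIV gradf"
    and grad_lip: "\<And>B. bounded B \<Longrightarrow>
          \<exists>L. \<forall>u\<in>B. \<forall>v\<in>B. norm (gradf u - gradf v) \<le> L * norm (u - v)"
    and S_ne: "\<exists>z. \<forall>y. f z \<le> f y"
    and t0_pos: "t0 > 0" and q_pos: "q > 0" and p_ge: "p \<ge> 1" and gamma_gt: "\<gamma> > 1"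
    and x_d1: "\<And>t. t \<ge> t0 \<Longrightarrow> (x has_vector_derivative x' t) (at t within {t0..})"
    and x_d2: "\<And>t. t \<ge> t0 \<Longrightarrow> (x' has_vector_derivative x'' t) (at t within {t0..})"
    and x''_cont: "continuous_on {t0..} x''"
    and lam_pos: "\<And>t. t \<ge> t0 \<Longrightarrow> lam t > 0"
    and lam_d: "\<And>t. t \<ge> t0 \<Longrightarrow> (lam has_real_derivative lam' t) (at t within {t0..})"
    and lam'_cont: "continuous_on {t0..} lam'"
    and tau_def: "\<And>t. tau t = (1 / q powr q) *
          (t0 + integral {t0..t} (\<lambda>r. lam r powr (1 / q))) powr q"
    and tau_d1: "\<And>t. t \<ge> t0 \<Longrightarrow> (tau has_real_derivative dtau t) (at t within {t0..})"
    and tau_d2: "\<And>t. t \<ge> t0 \<Longrightarrow> (dtau has_real_derivative ddtau t) (at t within {t0..})"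
    and ode: "\<And>t. t \<ge> t0 \<Longrightarrow>
          x'' t + (((1 + \<gamma>) * (dtau t)\<^sup>2 - tau t * ddtau t) / (tau t * dtau t)) *\<^sub>R x' t
          + (\<gamma> * (dtau t)\<^sup>2 / tau t) *\<^sub>R gradf (x t + ((1 / \<gamma>) * (tau t / dtau t)) *\<^sub>R x' t) = 0"
    and coupling: "\<And>t. t \<ge> t0 \<Longrightarrow>
          lam t powr p * \<bar>dtau t\<bar> powr (p - 1) *
          (if p = 1 then 1
           else norm (gradf (x t + ((1 / \<gamma>) * (tau t / dtau t)) *\<^sub>R x' t)) powr (p - 1)) = 1"
  shows "(\<lambda>t. f (x t) - (INF y. f y)) \<in> o(\<lambda>t. t powr (-(1 + q - 1 / p)))
         \<and> (\<exists>z. (\<forall>y. f z \<le> f y) \<and> weak_conv_at_top x z)"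
proof -
  \<comment> \<open>Continuity of \<open>gradf\<close>, \<open>x''\<close>, \<open>lam'\<close> and the local Lipschitz bound only serve the
    existence of solutions.\<close>
  interpret closed_loop_time_scaling f gradf t0 q p \<gamma> x x' x'' lam lam' tau dtau ddtau
    by unfold_locales (fact f_convex f_grad S_ne t0_pos q_pos p_ge gamma_gt x_d1 x_d2 lam_pos lam_d
        tau_def tau_d1 tau_d2 ode coupling)+
  obtain z where "z \<in> minimizers" "weak_conv_at_top y z"
    using y_weak_conv[OF tau_at_top] by blast
  then show ?thesis
    using gap_x_smallo x_weak_conv unfolding fmin_def minimizers_def by blast
qed

end
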